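(* Let $X = X(n;S)$ be a (simple, undirected) circulant graph. Then $X$ is edge-transitive if and only if it is arc-transitive. *)

theory Defs
  imports Main
begin

text \<open>Circulant graph X(n;S): vertex set Z_n = {0..<n}; connection set S \<subseteq> Z_n \ {0}
  with S = -S (simple, undirected); x ~ y iff y - x (mod n) \<in> S.\<close>

definition circulant_conn_set :: "nat \<Rightarrow> nat set \<Rightarrow> bool" where
  "circulant_conn_set n S \<longleftrightarrow> S \<subseteq> {1..<n} \<and> (\<forall>s\<in>S. n - s \<in> S)"

definition circ_adj :: "nat \<Rightarrow> nat set \<Rightarrow> nat \<Rightarrow> nat \<Rightarrow> bool" where
  "circ_adj n S x y \<longleftrightarrow> x < n \<and> y < n \<and> (y + n - x) mod n \<in> S"

definition graph_aut :: "'a set \<Rightarrow> ('a \<Rightarrow> 'a \<Rightarrow> bool) \<Rightarrow> ('a \<Rightarrow> 'a) \<Rightarrow> bool" where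
  "graph_aut V adj f \<longleftrightarrow> bij_betw f V V \<and>
     (\<forall>x\<in>V. \<forall>y\<in>V. adj x y \<longleftrightarrow> adj (f x) (f y))"

definition graph_edges :: "('a \<Rightarrow> 'a \<Rightarrow> bool) \<Rightarrow> 'a set set" where
  "graph_edges adj = {{x, y} | x y. adj x y}"

definition graph_arcs :: "('a \<Rightarrow> 'a \<Rightarrow> bool) \<Rightarrow> ('a \<times> 'a) set" where
  "graph_arcs adj = {(x, y). adj x y}"

definition edge_transitive :: "'a set \<Rightarrow> ('a \<Rightarrow> 'a \<Rightarrow> bool) \<Rightarrow> bool" where
  "edge_transitive V adj \<longleftrightarrow>
     (\<forall>e1\<in>graph_edges adj. \<forall>e2\<in>graph_edges adj. \<exists>f. graph_aut V adj f \<and> f ` e1 = e2)"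

definition arc_transitive :: "'a set \<Rightarrow> ('a \<Rightarrow> 'a \<Rightarrow> bool) \<Rightarrow> bool" where
  "arc_transitive V adj \<longleftrightarrow>
     (\<forall>(x, y)\<in>graph_arcs adj. \<forall>(u, v)\<in>graph_arcs adj.
        \<exists>f. graph_aut V adj f \<and> f x = u \<and> f y = v)"

end

theory Submission
  imports Defs
begin

text \<open>Because \<open>S = -S\<close>, every reflection \<open>z \<mapsto> c - z\<close> of \<open>\<int>\<^sub>n\<close> is an automorphism of the
  circulant graph, and choosing \<open>c = u + v\<close> it reverses the arc \<open>(u, v)\<close>. So every edge of a
  circulant graph can be flipped by an automorphism, and in any graph with this property an
  automorphism carrying an edge onto another one can be corrected to carry a prescribed arc onto a
  prescribed arc. The converse implication holds in every graph.\<close>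

lemma graph_aut_comp:
  assumes "graph_aut V adj f" "graph_aut V adj g"
  shows "graph_aut V adj (g \<circ> f)"
  using assms unfolding graph_aut_def
  by (auto intro: bij_betw_trans dest: bij_betwE)

lemma arc_transitive_imp_edge_transitive:
  assumes "arc_transitive V adj"
  shows "edge_transitive V adj"
  unfolding edge_transitive_def graph_edges_def
proof clarify
  fix x y u v
  assume "adj x y" "adj u v"
  then obtain f where "graph_aut V adj f" "f x = u" "f y = v"
    using assms unfolding arc_transitive_def graph_arcs_def by fastforce
  then show "\<exists>f. graph_aut V adj f \<and> f ` {x, y} = {u, v}" by auto
qed

lemma edge_transitive_imp_arc_transitive:
  assumes edge_trans: "edge_transitive V adj"
    and reversible: "\<And>u v. adj u v \<Longrightarrow> \<exists>g. graph_aut V adj g \<and> g u = v \<and> g v = u"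
  shows "arc_transitive V adj"
  unfolding arc_transitive_def
proof clarify
  fix x y u v
  assume "(x, y) \<in> graph_arcs adj" "(u, v) \<in> graph_arcs adj"
  then have "adj x y" "adj u v" by (auto simp: graph_arcs_def)
  then obtain f where f: "graph_aut V adj f" "f ` {x, y} = {u, v}"
    using edge_trans unfolding edge_transitive_def graph_edges_def by blast
  then consider "f x = u" "f y = v" | "f x = v" "f y = u"
    by (auto simp: doubleton_eq_iff)
  then show "\<exists>f. graph_aut V adj f \<and> f x = u \<and> f y = v"
  proof cases
    case 1
    with f show ?thesis by blast
  next
    case 2
    obtain g where "graph_aut V adj g" "g u = v" "g v = u"
      using reversible \<open>adj u v\<close> by blast
    with f 2 show ?thesis
      by (intro exI[of _ "g \<circ> f"]) (simp add: graph_aut_comp)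
  qed
qed

lemma int_mod_diff:
  fixes x y n :: nat
  assumes "x < n"
  shows "int ((y + n - x) mod n) = (int y - int x) mod int n"
proof -
  have "int (y + n - x) = int y - int x + int n" using assms by simp
  then show ?thesis by (simp add: zmod_int)
qed

lemma add_diff_mod_eq_diff:
  fixes x y n :: nat
  assumes "x \<le> y" "y < n"
  shows "(y + n - x) mod n = y - x"
proof -
  have "(y + n - x) mod n = (y - x + n) mod n"
    using assms by (simp add: algebra_simps)
  also have "\<dots> = y - x"
    using assms by (simp only: mod_add_self2) simp
  finally show ?thesis .
qed

lemma add_diff_mod_swap:
  fixes x y n :: nat
  assumes "x < n" "y < n" "x \<noteq> y"
  shows "(x + n - y) mod n = n - (y + n - x) mod n"
proof (cases "x < y")
  case True
  then show ?thesis using assms add_diff_mod_eq_diff[of x y n] by simp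
next
  case False
  then show ?thesis using assms add_diff_mod_eq_diff[of y x n] by simp
qed

lemma circ_adj_sym:
  assumes "circulant_conn_set n S" "circ_adj n S x y"
  shows "circ_adj n S y x"
proof -
  let ?d = "(y + n - x) mod n"
  have xy: "x < n" "y < n" and "?d \<in> S"
    using assms(2) by (auto simp: circ_adj_def)
  with assms(1) have "n - ?d \<in> S" "?d \<noteq> 0"
    by (auto simp: circulant_conn_set_def)
  moreover from \<open>?d \<noteq> 0\<close> have "x \<noteq> y" by auto
  ultimately show ?thesis
    using xy add_diff_mod_swap[OF xy] by (simp add: circ_adj_def)
qed

definition circ_reflection :: "nat \<Rightarrow> nat \<Rightarrow> nat \<Rightarrow> nat" where
  "circ_reflection n c z = (c + n - z) mod n"

lemma circ_reflection_less: "z < n \<Longrightarrow> circ_reflection n c z < n"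
  by (simp add: circ_reflection_def)

lemma int_circ_reflection:
  "z < n \<Longrightarrow> int (circ_reflection n c z) = (int c - int z) mod int n"
  unfolding circ_reflection_def by (rule int_mod_diff)

lemma circ_reflection_involution:
  assumes "z < n"
  shows "circ_reflection n c (circ_reflection n c z) = z"
proof -
  have "int (circ_reflection n c (circ_reflection n c z)) = (int c - (int c - int z) mod int n) mod int n"
    using assms by (simp add: int_circ_reflection circ_reflection_less)
  also have "\<dots> = int z"
    using assms by (simp add: mod_diff_right_eq)
  finally show ?thesis by simp
qed

lemma circ_reflection_diff:
  assumes "x < n" "y < n"
  shows "(circ_reflection n c y + n - circ_reflection n c x) mod n = (x + n - y) mod n"
proof -
  have "int ((circ_reflection n c y + n - circ_reflection n c x) mod n)
      = ((int c - int y) mod int n - (int c - int x) mod int n) mod int n"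
    using assms by (simp add: int_mod_diff int_circ_reflection circ_reflection_less)
  also have "\<dots> = int ((x + n - y) mod n)"
    using assms by (simp add: mod_diff_eq int_mod_diff)
  finally show ?thesis by simp
qed

lemma circ_reflection_swap:
  assumes "u < n" "v < n"
  shows "circ_reflection n ((u + v) mod n) u = v"
proof -
  have "int (circ_reflection n ((u + v) mod n) u) = ((int u + int v) mod int n - int u) mod int n"
    using assms by (simp add: int_circ_reflection zmod_int)
  also have "\<dots> = int v"
    using assms by (simp add: mod_diff_left_eq)
  finally show ?thesis by simp
qed

lemma circ_reflection_aut:
  assumes "circulant_conn_set n S"
  shows "graph_aut {0..<n} (circ_adj n S) (circ_reflection n c)"
  unfolding graph_aut_def
proof (intro conjI ballI)
  show "bij_betw (circ_reflection n c) {0..<n} {0..<n}"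
    by (rule bij_betw_byWitness[where f' = "circ_reflection n c"])
      (auto simp: circ_reflection_involution circ_reflection_less)
next
  fix x y
  assume "x \<in> {0..<n}" "y \<in> {0..<n}"
  then have "circ_adj n S (circ_reflection n c x) (circ_reflection n c y) \<longleftrightarrow> circ_adj n S y x"
    by (simp add: circ_adj_def circ_reflection_less circ_reflection_diff)
  then show "circ_adj n S x y \<longleftrightarrow> circ_adj n S (circ_reflection n c x) (circ_reflection n c y)"
    using circ_adj_sym[OF assms] by blast
qed

lemma circ_adj_reversible:
  assumes "circulant_conn_set n S" "circ_adj n S u v"
  shows "\<exists>g. graph_aut {0..<n} (circ_adj n S) g \<and> g u = v \<and> g v = u"
proof -
  have "u < n" "v < n" using assms(2) by (auto simp: circ_adj_def)
  then have "circ_reflection n ((u + v) mod n) u = v" "circ_reflection n ((u + v) mod n) v = u"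
    using circ_reflection_swap[of u n v] circ_reflection_swap[of v n u] by (simp_all add: add.commute)
  with circ_reflection_aut[OF assms(1)] show ?thesis by blast
qed

theorem mainTheorem5:
  fixes n :: nat and S :: "nat set"
  assumes "n \<ge> 1" and "circulant_conn_set n S"
  shows "edge_transitive {0..<n} (circ_adj n S) \<longleftrightarrow> arc_transitive {0..<n} (circ_adj n S)"
proof
  show "arc_transitive {0..<n} (circ_adj n S)" if "edge_transitive {0..<n} (circ_adj n S)"
    using edge_transitive_imp_arc_transitive[OF that circ_adj_reversible[OF assms(2)]] .
qed (rule arc_transitive_imp_edge_transitive)

end
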